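(* Let $\sigma\subseteq N_\mathbb{Q}$ be a pointed cone, let $\partial_{e,p}$ ($e\in M$, $p\in N$) be a non-zero homogeneous vector field on $X_\sigma$, and let $\tau\subseteq\sigma$ be a face. Then $\partial_{e,p}$ vanishes on the orbit closure $\overline{\mathcal{O}(\tau)}$ (i.e. $\partial_{e,p}(\mathbb{C}[\sigma^\vee_M])\subseteq I(\tau)$) if and only if: if $\partial_{e,p}$ is of type I: $p\in\mathrm{span}\,\tau$ or $\langle e,\rho\rangle>0$ for some $\rho\in\tau(1)$; if $\partial_{e,p}$ is of type II: $\langle e,\rho\rangle>0$ for some $\rho\in\tau(1)$.
   Context: $N$ is a lattice with dual $M$, pairing $\langle m,p\rangle$. $\sigma\subseteq N_\mathbb{Q}$ is a strongly convex rational polyhedral cone, $\sigma^\vee_M=\sigma^\vee\cap M$, $X_\sigma=\mathrm{Spec}\,\mathbb{C}[\sigma^\vee_M]$; for a face $\tau$, $\tau(1)$ is the set of primitive ray generators of $\tau$, $\mathcal{O}(\tau)$ is the corresponding torus orbit, and the ideal of its closure is $I(\tau)=\bigoplus_{m\in\sigma^\vee_M\setminus\tau^\perp}\mathbb{C}\chi^m$. $\partial_{e,p}$ is the derivation $\chi^m\mapsto\langle m,p\rangle\chi^{m+e}$; a homogeneous vector field on $X_\sigma$ is such a $\partial_{e,p}$ preserving $\mathbb{C}[\sigma^\vee_M]$, and (for $p\ne0$) this happens exactly when it is of Type I ($e\in\sigma^\vee_M$) or Type II (there is a ray $\rho_e\in\sigma(1)$ with $p\in\mathbb{Z}\rho_e$,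 $\langle e,\rho_e\rangle=-1$, $\langle e,\rho\rangle\ge0$ for all other $\rho\in\sigma(1)$). *)

theory Defs
  imports "HOL-Analysis.Analysis"
begin

text \<open>Lattice N = int^'n, dual lattice M = int^'n, N_Q = rat^'n.\<close>

definition qvec :: "int ^ 'n \<Rightarrow> rat ^ 'n" where
  "qvec v = (\<chi> i. of_int (v $ i))"

definition pair :: "int ^ 'n \<Rightarrow> int ^ 'n \<Rightarrow> int" where
  "pair m v = (\<Sum>i\<in>UNIV. m $ i * v $ i)"

definition qpair :: "rat ^ 'n \<Rightarrow> rat ^ 'n \<Rightarrow> rat" where
  "qpair u x = (\<Sum>i\<in>UNIV. u $ i * x $ i)"

definition qscale :: "rat \<Rightarrow> rat ^ 'n \<Rightarrow> rat ^ 'n" where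
  "qscale c x = (\<chi> i. c * x $ i)"

definition iscale :: "int \<Rightarrow> int ^ 'n \<Rightarrow> int ^ 'n" where
  "iscale c x = (\<chi> i. c * x $ i)"

definition cone_gen :: "(rat ^ 'n) set \<Rightarrow> (rat ^ 'n) set" where
  "cone_gen S = {x. \<exists>c. (\<forall>v\<in>S. c v \<ge> 0) \<and> x = (\<Sum>v\<in>S. qscale (c v) v)}"

definition rat_poly_cone :: "(rat ^ 'n) set \<Rightarrow> bool" where
  "rat_poly_cone \<sigma> \<longleftrightarrow> (\<exists>S. finite S \<and> \<sigma> = cone_gen (qvec ` S))"

definition strongly_convex :: "(rat ^ 'n) set \<Rightarrow> bool" where
  "strongly_convex \<sigma> \<longleftrightarrow> (\<forall>x. x \<in> \<sigma> \<and> - x \<in> \<sigma> \<longrightarrow> x = 0)"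

definition dual_cone :: "(rat ^ 'n) set \<Rightarrow> (rat ^ 'n) set" where
  "dual_cone \<sigma> = {u. \<forall>x\<in>\<sigma>. qpair u x \<ge> 0}"

definition dualM :: "(rat ^ 'n) set \<Rightarrow> (int ^ 'n) set" where
  "dualM \<sigma> = {m. qvec m \<in> dual_cone \<sigma>}"

definition perpM :: "(rat ^ 'n) set \<Rightarrow> (int ^ 'n) set" where
  "perpM \<tau> = {m. \<forall>x\<in>\<tau>. qpair (qvec m) x = 0}"

definition is_face :: "(rat ^ 'n) set \<Rightarrow> (rat ^ 'n) set \<Rightarrow> bool" where
  "is_face \<tau> \<sigma> \<longleftrightarrow> (\<exists>u\<in>dual_cone \<sigma>. \<tau> = {x\<in>\<sigma>. qpair u x = 0})"

definition primitive :: "int ^ 'n \<Rightarrow> bool" where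
  "primitive v \<longleftrightarrow> v \<noteq> 0 \<and> (\<forall>k w. v = iscale k w \<longrightarrow> \<bar>k\<bar> = 1)"

definition rays :: "(rat ^ 'n) set \<Rightarrow> (int ^ 'n) set" where
  "rays C = {\<rho>. primitive \<rho> \<and> is_face (cone_gen {qvec \<rho>}) C}"

definition qspan :: "(rat ^ 'n) set \<Rightarrow> (rat ^ 'n) set" where
  "qspan A = {x. \<exists>S c. finite S \<and> S \<subseteq> A \<and> x = (\<Sum>v\<in>S. qscale (c v) v)}"

text \<open>The semigroup algebra C[sigma-dual_M], as finitely supported coefficient
  functions M -> C supported in sigma-dual_M (f m is the coefficient of chi^m).\<close>
definition alg :: "(rat ^ 'n) set \<Rightarrow> ((int ^ 'n) \<Rightarrow> complex) set" where
  "alg \<sigma> = {f. finite {m. f m \<noteq> 0} \<and> (\<forall>m. f m \<noteq> 0 \<longrightarrow> m \<in> dualM \<sigma>)}"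

text \<open>Ideal I(tau) = span of chi^m, m in sigma-dual_M minus tau-perp.\<close>
definition orbit_ideal :: "(rat ^ 'n) set \<Rightarrow> (rat ^ 'n) set \<Rightarrow> ((int ^ 'n) \<Rightarrow> complex) set" where
  "orbit_ideal \<sigma> \<tau> = {f. finite {m. f m \<noteq> 0} \<and>
      (\<forall>m. f m \<noteq> 0 \<longrightarrow> m \<in> dualM \<sigma> - perpM \<tau>)}"

text \<open>The derivation partial_{e,p}: chi^m maps to <m,p> chi^(m+e), extended linearly.\<close>
definition der :: "int ^ 'n \<Rightarrow> int ^ 'n \<Rightarrow> (int ^ 'n \<Rightarrow> complex) \<Rightarrow> (int ^ 'n \<Rightarrow> complex)" where
  "der e p f = (\<lambda>m. of_int (pair (m - e) p) * f (m - e))"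

definition homogeneous_vf :: "(rat ^ 'n) set \<Rightarrow> int ^ 'n \<Rightarrow> int ^ 'n \<Rightarrow> bool" where
  "homogeneous_vf \<sigma> e p \<longleftrightarrow> der e p ` alg \<sigma> \<subseteq> alg \<sigma>"

definition typeI :: "(rat ^ 'n) set \<Rightarrow> int ^ 'n \<Rightarrow> bool" where
  "typeI \<sigma> e \<longleftrightarrow> e \<in> dualM \<sigma>"

definition typeII :: "(rat ^ 'n) set \<Rightarrow> int ^ 'n \<Rightarrow> int ^ 'n \<Rightarrow> bool" where
  "typeII \<sigma> e p \<longleftrightarrow> (\<exists>\<rho>e\<in>rays \<sigma>. (\<exists>k. p = iscale k \<rho>e) \<and> pair e \<rho>e = -1 \<and>
      (\<forall>\<rho>\<in>rays \<sigma> - {\<rho>e}. pair e \<rho> \<ge> 0))"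

definition vanishes_on_orbit_closure :: "(rat ^ 'n) set \<Rightarrow> (rat ^ 'n) set \<Rightarrow> int ^ 'n \<Rightarrow> int ^ 'n \<Rightarrow> bool" where
  "vanishes_on_orbit_closure \<sigma> \<tau> e p \<longleftrightarrow> der e p ` alg \<sigma> \<subseteq> orbit_ideal \<sigma> \<tau>"

end

theory Submission
  imports Defs
begin

text \<open>On characters, \<open>\<partial>\<^sub>e\<^sub>,\<^sub>p\<close> sends \<open>\<chi>\<^sup>m\<close> to \<open>\<langle>m,p\<rangle>\<chi>\<^sup>m\<^sup>+\<^sup>e\<close>, so it vanishes on the orbit
  closure iff no \<open>m \<in> \<sigma>\<^sup>\<or>\<^sub>M\<close> with \<open>\<langle>m,p\<rangle> \<noteq> 0\<close> has \<open>m + e \<in> \<tau>\<^sup>\<bottom>\<close>. A ray \<open>\<rho>\<close> of \<open>\<tau>\<close> with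
  \<open>\<langle>e,\<rho>\<rangle> > 0\<close> excludes this, as \<open>\<langle>m+e,\<rho>\<rangle> > 0\<close>; for type I so does \<open>p \<in> span \<tau>\<close>, since
  then \<open>e \<in> \<sigma>\<^sup>\<or>\<close> forces \<open>m \<perp> \<tau>\<close>. Conversely, if \<open>e \<le> 0\<close> on the rays of \<open>\<tau>\<close>, hence on \<open>\<tau>\<close>
  (a pointed cone is generated by its rays), a witness is \<open>m = jU + W\<close> for an integral
  functional \<open>U\<close> cutting out \<open>\<tau>\<close> and \<open>j \<gg> 0\<close>: in type I \<open>W\<close> is a Farkas certificate
  vanishing on \<open>\<tau>\<close> but not on \<open>p\<close>; in type II \<open>W = -e\<close> if \<open>\<langle>U,\<rho>\<^sub>e\<rangle> = 0\<close>, and otherwise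
  \<open>m = U\<close> works because homogeneity gives \<open>U + e \<in> \<sigma>\<^sup>\<or>\<close>.\<close>

lemma qpair_add_right[simp]: "qpair u (x + y) = qpair u x + qpair u y"
  by (simp add: qpair_def distrib_left sum.distrib)
lemma qpair_diff_right[simp]: "qpair u (x - y) = qpair u x - qpair u y"
  by (simp add: qpair_def right_diff_distrib sum_subtractf)
lemma qpair_diff_left[simp]: "qpair (u - v) x = qpair u x - qpair v x"
  by (simp add: qpair_def left_diff_distrib sum_subtractf)
lemma qpair_neg_right[simp]: "qpair u (- x) = - qpair u x"
  by (simp add: qpair_def sum_negf)
lemma qpair_neg_left[simp]: "qpair (- u) x = - qpair u x"
  by (simp add: qpair_def sum_negf)
lemma qpair_zero_right[simp]: "qpair u 0 = 0"
  by (simp add: qpair_def)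
lemma qpair_scale_right[simp]: "qpair u (qscale c x) = c * qpair u x"
  by (simp add: qpair_def qscale_def sum_distrib_left algebra_simps)
lemma qpair_scale_left[simp]: "qpair (qscale c u) x = c * qpair u x"
  by (simp add: qpair_def qscale_def sum_distrib_left algebra_simps)
lemma qpair_sum_right: "qpair u (sum f F) = (\<Sum>v\<in>F. qpair u (f v))"
  by (simp add: qpair_def sum_distrib_left sum.swap[of _ F])
lemma qpair_sum_left: "qpair (sum f F) x = (\<Sum>v\<in>F. qpair (f v) x)"
  by (simp add: qpair_def sum_distrib_right sum.swap[of _ F])

lemma qpair_self_pos:
  assumes "x \<noteq> 0"
  shows "qpair x x > 0"
proof -
  obtain i where i: "x $ i \<noteq> 0" using assms by (auto simp: vec_eq_iff)
  have "x $ i * x $ i \<le> qpair x x" unfolding qpair_def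
    by (rule member_le_sum) auto
  moreover have "x $ i * x $ i > 0" using i by (cases "x $ i > 0") (auto simp: mult_neg_neg)
  ultimately show ?thesis by simp
qed

lemma qscale_0[simp]: "qscale 0 x = 0" by (simp add: qscale_def vec_eq_iff)
lemma qscale_1[simp]: "qscale 1 x = x" by (simp add: qscale_def vec_eq_iff)
lemma qscale_zero[simp]: "qscale c 0 = 0" by (simp add: qscale_def vec_eq_iff)
lemma qscale_qscale[simp]: "qscale a (qscale b x) = qscale (a * b) x"
  by (simp add: qscale_def vec_eq_iff)
lemma qscale_add_right: "qscale c (x + y) = qscale c x + qscale c y"
  by (simp add: qscale_def vec_eq_iff algebra_simps)
lemma qscale_add_left: "qscale (a + b) x = qscale a x + qscale b x"
  by (simp add: qscale_def vec_eq_iff algebra_simps)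
lemma qscale_component[simp]: "qscale c x $ i = c * x $ i"
  by (simp add: qscale_def)
lemma qscale_eq_0_iff: "qscale c x = 0 \<longleftrightarrow> c = 0 \<or> x = 0"
  by (auto simp: qscale_def vec_eq_iff)

lemma qvec_component[simp]: "qvec v $ i = of_int (v $ i)" by (simp add: qvec_def)
lemma qvec_iscale: "qvec (iscale k v) = qscale (of_int k) (qvec v)"
  by (simp add: vec_eq_iff iscale_def)
lemma qvec_eq_0_iff[simp]: "qvec a = 0 \<longleftrightarrow> a = 0"
  by (simp add: vec_eq_iff)
lemma qpair_qvec[simp]: "qpair (qvec m) (qvec v) = of_int (pair m v)"
  by (simp add: qpair_def pair_def)

lemma pair_add_left: "pair (a + b) v = pair a v + pair b v"
  by (simp add: pair_def distrib_right sum.distrib)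
lemma pair_diff_left: "pair (a - b) v = pair a v - pair b v"
  by (simp add: pair_def left_diff_distrib sum_subtractf)
lemma pair_neg_left: "pair (- a) v = - pair a v"
  by (simp add: pair_def sum_negf)
lemma pair_iscale_right: "pair m (iscale k v) = k * pair m v"
  by (simp add: pair_def iscale_def sum_distrib_left algebra_simps)
lemma pair_iscale_left: "pair (iscale k m) v = k * pair m v"
  by (simp add: pair_def iscale_def sum_distrib_left algebra_simps)

lemma primitive_factor:
  fixes t :: "int ^ 'n"
  assumes "t \<noteq> 0"
  obtains \<rho> d where "primitive \<rho>" "d > 0" "t = iscale d \<rho>"
proof -
  define d where "d = Gcd (range (\<lambda>i. t $ i))"
  have dvd: "d dvd t $ i" for i unfolding d_def by (rule Gcd_dvd) auto
  have "d \<noteq> 0" using assms unfolding d_def by (auto simp: vec_eq_iff)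
  moreover have "d \<ge> 0" unfolding d_def by simp
  ultimately have dpos: "d > 0" by simp
  define \<rho> where "\<rho> = (\<chi> i. t $ i div d)"
  have t_eq: "t = iscale d \<rho>" using dvd by (simp add: \<rho>_def iscale_def vec_eq_iff)
  have "primitive \<rho>" unfolding primitive_def
  proof (intro conjI allI impI)
    show "\<rho> \<noteq> 0" using t_eq assms by (auto simp: iscale_def vec_eq_iff)
  next
    fix k w assume "\<rho> = iscale k w"
    then have "k * d dvd t $ i" for i using t_eq by (simp add: iscale_def)
    then have "k * d dvd d" unfolding d_def by (intro Gcd_greatest) auto
    then have "k dvd 1" using dpos by (metis dvd_mult_cancel_right mult_1 mult.commute less_irrefl)
    then show "\<bar>k\<bar> = 1" by simp
  qed
  then show ?thesis using dpos t_eq that by blast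
qed

lemma clear_denominators:
  fixes u :: "rat ^ 'n"
  obtains d U where "d > 0" "qvec U = qscale (of_int d) u"
proof -
  define num where "num i = fst (quotient_of (u $ i))" for i
  define den where "den i = snd (quotient_of (u $ i))" for i
  have den_pos: "den i > 0" for i unfolding den_def by (rule quotient_of_denom_pos')
  have u_eq: "u $ i = of_int (num i) / of_int (den i)" for i
    unfolding num_def den_def by (rule quotient_of_div) simp
  define d where "d = (\<Prod>i\<in>UNIV. den i)"
  have dpos: "d > 0" unfolding d_def using den_pos by (simp add: prod_pos)
  have den_dvd: "den i dvd d" for i unfolding d_def by (rule dvd_prodI) auto
  define U where "U = (\<chi> i. num i * (d div den i))"
  have "qvec U = qscale (of_int d) u"
  proof (simp add: vec_eq_iff U_def, intro allI)
    fix i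
    have "(of_int d :: rat) = of_int (den i) * of_int (d div den i)"
      using den_dvd[of i] by (metis dvd_mult_div_cancel of_int_mult)
    then show "of_int (num i) * of_int (d div den i) = (of_int d :: rat) * u $ i"
      using den_pos[of i] by (simp add: u_eq field_simps)
  qed
  then show ?thesis using dpos that by blast
qed

inductive_set cone_hull :: "(rat ^ 'n) set \<Rightarrow> (rat ^ 'n) set" for S :: "(rat ^ 'n) set" where
  zero: "0 \<in> cone_hull S"
| step: "x \<in> cone_hull S \<Longrightarrow> v \<in> S \<Longrightarrow> c \<ge> 0 \<Longrightarrow> x + qscale c v \<in> cone_hull S"

lemma cone_hull_gen: "v \<in> S \<Longrightarrow> v \<in> cone_hull S"
  using cone_hull.step[OF cone_hull.zero, of v S 1] by simp

lemma cone_hull_add: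
  assumes "x \<in> cone_hull S"
  shows "y \<in> cone_hull S \<Longrightarrow> x + y \<in> cone_hull S"
proof (induction y rule: cone_hull.induct)
  case zero then show ?case using assms by simp
next
  case (step y v c) then show ?case using cone_hull.step[of "x + y" S v c] by (simp add: add.assoc)
qed

lemma cone_hull_scale: "x \<in> cone_hull S \<Longrightarrow> c \<ge> 0 \<Longrightarrow> qscale c x \<in> cone_hull S"
proof (induction x rule: cone_hull.induct)
  case zero then show ?case by (simp add: cone_hull.zero)
next
  case (step y v d) then show ?case using cone_hull.step[of "qscale c y" S v "c * d"]
    by (simp add: qscale_add_right)
qed

lemma cone_hull_minimal: "G \<subseteq> cone_hull H \<Longrightarrow> cone_hull G \<subseteq> cone_hull H"
proof
  fix x assume G: "G \<subseteq> cone_hull H" and "x \<in> cone_hull G"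
  from this(2) show "x \<in> cone_hull H"
  proof (induction x rule: cone_hull.induct)
    case zero show ?case by (rule cone_hull.zero)
  next
    case (step x v c) then show ?case using G by (blast intro: cone_hull_add cone_hull_scale)
  qed
qed

lemma cone_hull_mono: "S \<subseteq> T \<Longrightarrow> cone_hull S \<subseteq> cone_hull T"
  by (rule cone_hull_minimal) (blast intro: cone_hull_gen)

lemma cone_hull_insertE:
  assumes "x \<in> cone_hull (insert g G)"
  obtains y t where "y \<in> cone_hull G" "t \<ge> 0" "x = y + qscale t g"
proof -
  from assms have "\<exists>y t. y \<in> cone_hull G \<and> t \<ge> 0 \<and> x = y + qscale t g"
  proof (induction x rule: cone_hull.induct)
    case zero then show ?case by (auto intro!: exI[of _ 0] cone_hull.zero)
  next
    case (step x v c)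
    then obtain y t where y: "y \<in> cone_hull G" "t \<ge> 0" "x = y + qscale t g" by blast
    show ?case
    proof (cases "v = g")
      case True then show ?thesis using y step
        by (intro exI[of _ y] exI[of _ "t + c"]) (simp add: qscale_add_left add.assoc)
    next
      case False then show ?thesis using y step
        by (intro exI[of _ "y + qscale c v"] exI[of _ t])
          (auto intro: cone_hull.step simp: algebra_simps)
    qed
  qed
  then show ?thesis using that by blast
qed

lemma cone_hull_insertI: "y \<in> cone_hull G \<Longrightarrow> t \<ge> 0 \<Longrightarrow> y + qscale t g \<in> cone_hull (insert g G)"
  using cone_hull_mono[of G "insert g G"] by (blast intro: cone_hull.step)

lemma cone_hull_nonneg:
  assumes "\<And>v. v \<in> S \<Longrightarrow> qpair w v \<ge> 0" and "x \<in> cone_hull S"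
  shows "qpair w x \<ge> 0"
  using assms(2) by induction (simp_all add: assms(1))

lemma cone_hull_perp:
  assumes "\<And>v. v \<in> S \<Longrightarrow> qpair w v = 0" and "x \<in> cone_hull S"
  shows "qpair w x = 0"
  using assms(2) by induction (simp_all add: assms(1))

lemma cone_hull_face:
  assumes nonneg: "\<And>v. v \<in> S \<Longrightarrow> qpair w v \<ge> 0"
  shows "{x\<in>cone_hull S. qpair w x = 0} = cone_hull {v\<in>S. qpair w v = 0}"
proof
  show "cone_hull {v\<in>S. qpair w v = 0} \<subseteq> {x\<in>cone_hull S. qpair w x = 0}"
    using cone_hull_mono[of "{v\<in>S. qpair w v = 0}" S] cone_hull_perp[of "{v\<in>S. qpair w v = 0}" w]
    by blast
  have "x \<in> cone_hull S \<Longrightarrow> qpair w x = 0 \<Longrightarrow> x \<in> cone_hull {v\<in>S. qpair w v = 0}" for x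
  proof (induction x rule: cone_hull.induct)
    case zero show ?case by (rule cone_hull.zero)
  next
    case (step x v c)
    have "qpair w x \<ge> 0" "c * qpair w v \<ge> 0"
      using cone_hull_nonneg[OF nonneg step(1)] nonneg[OF step(2)] step(3) by simp_all
    moreover have "qpair w x + c * qpair w v = 0" using step(5) by simp
    ultimately have "qpair w x = 0" "c * qpair w v = 0" by linarith+
    then show ?case using step(2-4) by (auto intro: cone_hull.step)
  qed
  then show "{x\<in>cone_hull S. qpair w x = 0} \<subseteq> cone_hull {v\<in>S. qpair w v = 0}" by blast
qed

lemma cone_hull_image:
  assumes lin: "\<And>x c v. f (x + qscale c v) = f x + qscale c (f v)" and f0: "f 0 = 0"
  shows "y \<in> cone_hull (f ` S) \<Longrightarrow> \<exists>z\<in>cone_hull S. y = f z"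
proof (induction y rule: cone_hull.induct)
  case zero show ?case using f0 cone_hull.zero by metis
next
  case (step y v c)
  obtain z a where za: "z \<in> cone_hull S" "y = f z" "a \<in> S" "v = f a" using step(2,4) by blast
  then have "z + qscale c a \<in> cone_hull S" using step(3) by (blast intro: cone_hull.step)
  moreover have "y + qscale c v = f (z + qscale c a)" using za lin by simp
  ultimately show ?case by blast
qed

lemma cone_hull_empty: "cone_hull {} = {0}"
proof -
  have "x \<in> cone_hull {} \<Longrightarrow> x = 0" for x by (induction x rule: cone_hull.induct) simp_all
  then show ?thesis using cone_hull.zero by blast
qed

lemma sum_qscale_update:
  assumes "finite F" "a \<in> F"
  shows "(\<Sum>v\<in>F. qscale ((k(a := k a + c)) v) v) = (\<Sum>v\<in>F. qscale (k v) v) + qscale c a"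
proof -
  have "(\<Sum>v\<in>F. qscale ((k(a := k a + c)) v) v)
      = qscale (k a + c) a + (\<Sum>v\<in>F-{a}. qscale ((k(a := k a + c)) v) v)"
    using assms by (simp add: sum.remove)
  also have "(\<Sum>v\<in>F-{a}. qscale ((k(a := k a + c)) v) v) = (\<Sum>v\<in>F-{a}. qscale (k v) v)"
    by (rule sum.cong) auto
  also have "qscale (k a + c) a + (\<Sum>v\<in>F-{a}. qscale (k v) v)
      = (qscale (k a) a + (\<Sum>v\<in>F-{a}. qscale (k v) v)) + qscale c a"
    by (simp add: qscale_add_left algebra_simps)
  also have "qscale (k a) a + (\<Sum>v\<in>F-{a}. qscale (k v) v) = (\<Sum>v\<in>F. qscale (k v) v)"
    using assms by (simp add: sum.remove)
  finally show ?thesis .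
qed

lemma cone_gen_eq_cone_hull: "finite S \<Longrightarrow> cone_gen S = cone_hull S"
proof
  assume fin: "finite S"
  show "cone_gen S \<subseteq> cone_hull S"
  proof
    fix x assume "x \<in> cone_gen S"
    then obtain c where c: "\<forall>v\<in>S. c v \<ge> 0" "x = (\<Sum>v\<in>S. qscale (c v) v)"
      unfolding cone_gen_def by auto
    have "T \<subseteq> S \<Longrightarrow> (\<Sum>v\<in>T. qscale (c v) v) \<in> cone_hull S" for T
    proof (induction T rule: infinite_finite_induct)
      case (insert a A)
      then have "(\<Sum>v\<in>A. qscale (c v) v) + qscale (c a) a \<in> cone_hull S"
        using c by (intro cone_hull.step) auto
      then show ?case using insert by (simp add: add.commute)
    qed (simp_all add: cone_hull.zero)
    then show "x \<in> cone_hull S" using c by simp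
  qed
  show "cone_hull S \<subseteq> cone_gen S"
  proof
    fix x assume "x \<in> cone_hull S" then show "x \<in> cone_gen S"
    proof (induction x rule: cone_hull.induct)
      case zero then show ?case unfolding cone_gen_def by (auto intro!: exI[of _ "\<lambda>_. 0"])
    next
      case (step x v c)
      then obtain k where k: "\<forall>v\<in>S. k v \<ge> 0" "x = (\<Sum>v\<in>S. qscale (k v) v)"
        unfolding cone_gen_def by auto
      show ?case unfolding cone_gen_def
        using k step sum_qscale_update[OF fin step(2), of k c]
        by (auto intro!: exI[of _ "k(v := k v + c)"])
    qed
  qed
qed

lemma projection_avoids_cone:
  assumes u_nonneg: "\<And>g. g \<in> G \<Longrightarrow> qpair u g \<ge> 0" and ux: "qpair u x < 0"
    and uh: "qpair u h < 0" and x: "x \<notin> cone_hull (insert h G)"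
    and f_eq: "\<And>v. f v = qscale (qpair u h) v - qscale (qpair u v) h"
  shows "f x \<notin> cone_hull (f ` G)"
proof
  let ?a = "qpair u h"
  have f_lin: "f (y + qscale c v) = f y + qscale c (f v)" for y c v
    by (simp add: f_eq vec_eq_iff algebra_simps)
  assume "f x \<in> cone_hull (f ` G)"
  moreover have "f 0 = 0" by (simp add: f_eq)
  ultimately obtain z where z: "z \<in> cone_hull G" "f x = f z"
    using cone_hull_image[of f, OF f_lin] by blast
  define t where "t = (qpair u x - qpair u z) / ?a"
  have "t \<ge> 0" unfolding t_def using uh cone_hull_nonneg[OF u_nonneg z(1)] ux
    by (simp add: divide_nonpos_neg)
  moreover have "x = z + qscale t h"
  proof -
    have "\<forall>i. ?a * x $ i - qpair u x * h $ i = ?a * z $ i - qpair u z * h $ i"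
      using z(2) by (simp add: f_eq vec_eq_iff)
    then show ?thesis using uh unfolding t_def by (simp add: vec_eq_iff field_simps)
  qed
  ultimately have "x \<in> cone_hull (insert h G)" using cone_hull_insertI[OF z(1)] by simp
  then show False using x by contradiction
qed

text \<open>Fourier--Motzkin elimination: if the certificate for \<open>G - {h}\<close> is negative on \<open>h\<close>,
  project along \<open>h\<close> and pull back a certificate for the projected generators.\<close>

lemma farkas:
  assumes "finite G" "x \<notin> cone_hull G"
  obtains w where "\<And>g. g \<in> G \<Longrightarrow> qpair w g \<ge> 0" "qpair w x < 0"
proof -
  have "\<exists>w. (\<forall>g\<in>G. qpair w g \<ge> 0) \<and> qpair w x < 0"
    using assms
  proof (induction "card G" arbitrary: G x rule: less_induct)
    case less
    show ?case
    proof (cases "G = {}")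
      case True
      then have "x \<noteq> 0" using less(3) by (auto simp: cone_hull_empty)
      then show ?thesis using True qpair_self_pos[of x] by (intro exI[of _ "-x"]) auto
    next
      case False
      then obtain h where "h \<in> G" by blast
      define G0 where "G0 = G - {h}"
      have G: "G = insert h G0" using \<open>h \<in> G\<close> G0_def by blast
      have G0: "finite G0" "card G0 < card G"
        using less(2) \<open>h \<in> G\<close> card_Diff1_less[of G h] by (auto simp: G0_def)
      have "x \<notin> cone_hull G0" using less(3) cone_hull_mono[of G0 G] G by auto
      then obtain u where u: "\<forall>g\<in>G0. qpair u g \<ge> 0" "qpair u x < 0"
        using less(1)[OF G0(2,1)] by blast
      show ?thesis
      proof (cases "qpair u h \<ge> 0")
        case True then show ?thesis using u G by (intro exI[of _ u]) auto
      next
        case False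
        define f where "f v = qscale (qpair u h) v - qscale (qpair u v) h" for v
        have "f x \<notin> cone_hull (f ` G0)"
          using projection_avoids_cone[of G0 u x h f] u False less(3) G f_def by auto
        moreover have "card (f ` G0) < card G" using G0 card_image_le[OF G0(1), of f] by simp
        ultimately obtain u1 where u1: "\<forall>g\<in>f ` G0. qpair u1 g \<ge> 0" "qpair u1 (f x) < 0"
          using less(1)[of "f ` G0" "f x"] G0(1) by blast
        define w where "w = qscale (qpair u h) u1 - qscale (qpair u1 h) u"
        have w_f: "qpair w v = qpair u1 (f v)" for v
          by (simp add: w_def f_def algebra_simps)
        have "f h = 0" by (simp add: f_def)
        then show ?thesis using u1 G by (intro exI[of _ w]) (auto simp: w_f)
      qed
    qed
  qed
  then show ?thesis using that by blast
qed

lemma minimal_generators: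
  assumes "finite T"
  obtains G where "G \<subseteq> T" "cone_hull G = cone_hull T" "\<And>g. g \<in> G \<Longrightarrow> g \<notin> cone_hull (G - {g})"
proof -
  define \<G> where "\<G> = {G. G \<subseteq> T \<and> cone_hull G = cone_hull T}"
  obtain G where G: "G \<in> \<G>" and G_least: "\<And>G'. G' \<in> \<G> \<Longrightarrow> card G \<le> card G'"
    using ex_has_least_nat[of "\<lambda>G. G \<in> \<G>" T card] by (auto simp: \<G>_def)
  have "finite G" using G assms finite_subset by (auto simp: \<G>_def)
  have "g \<notin> cone_hull (G - {g})" if g: "g \<in> G" for g
  proof
    assume "g \<in> cone_hull (G - {g})"
    then have "G \<subseteq> cone_hull (G - {g})" by (blast intro: cone_hull_gen)
    then have "cone_hull (G - {g}) = cone_hull G"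
      using cone_hull_minimal cone_hull_mono[of "G - {g}" G] by blast
    then have "G - {g} \<in> \<G>" using G by (auto simp: \<G>_def)
    then have "card G \<le> card (G - {g})" by (rule G_least)
    then show False using card_Diff1_less[OF \<open>finite G\<close> g] by simp
  qed
  then show ?thesis using G that by (auto simp: \<G>_def)
qed

text \<open>Write \<open>-h = y - t g\<close> with \<open>y\<close> in the cone: if \<open>t\<close> exceeds the \<open>g\<close>-coefficient of \<open>y\<close>,
  then \<open>g\<close> is redundant; otherwise a positive multiple of \<open>h\<close> and its negative lie in the
  pointed cone.\<close>

lemma neg_generator_not_in_cone:
  assumes pointed: "strongly_convex (cone_hull G)"
    and minimal: "\<And>g. g \<in> G \<Longrightarrow> g \<notin> cone_hull (G - {g})"
    and g: "g \<in> G" and h: "h \<in> G" "h \<noteq> g"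
  shows "- h \<notin> cone_hull (insert (- g) G)"
proof
  assume "- h \<in> cone_hull (insert (- g) G)"
  then obtain y t where y: "y \<in> cone_hull G" "t \<ge> 0" "- h = y + qscale t (- g)"
    by (rule cone_hull_insertE)
  have "insert g (insert h (G - {g} - {h})) = G" using g h by blast
  then have "y \<in> cone_hull (insert g (insert h (G - {g} - {h})))" using y(1) by simp
  then obtain y1 b where y1: "y1 \<in> cone_hull (insert h (G - {g} - {h}))" "b \<ge> 0" "y = y1 + qscale b g"
    by (rule cone_hull_insertE)
  obtain y2 a where y2: "y2 \<in> cone_hull (G - {g} - {h})" "a \<ge> 0" "y1 = y2 + qscale a h"
    using y1(1) by (rule cone_hull_insertE)
  have sum_zero: "(y2 + qscale (1 + a) h) + qscale (b - t) g = 0"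
    using y(3) y1(3) y2(3) by (simp add: vec_eq_iff algebra_simps)
  have y2_cones: "y2 \<in> cone_hull (G - {g})" "y2 \<in> cone_hull G"
    using y2(1) cone_hull_mono[of "G - {g} - {h}"] by blast+
  show False
  proof (cases "t > b")
    case True
    have "y2 + qscale (1 + a) h \<in> cone_hull (G - {g})"
      using cone_hull.step[OF y2_cones(1), of h "1 + a"] h y2(2) by simp
    moreover have "g = qscale (1 / (t - b)) (y2 + qscale (1 + a) h)"
      using sum_zero True by (simp add: vec_eq_iff field_simps)
    ultimately have "g \<in> cone_hull (G - {g})"
      using cone_hull_scale[of _ "G - {g}" "1 / (t - b)"] True by simp
    then show False using minimal[OF g] by contradiction
  next
    case False
    have "qscale (1 + a) h \<in> cone_hull G"
      using cone_hull_scale[OF cone_hull_gen[OF h(1)]] y2(2) by simp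
    moreover have "y2 + qscale (b - t) g \<in> cone_hull G"
      using cone_hull.step[OF y2_cones(2) g] False by simp
    moreover have "- qscale (1 + a) h = y2 + qscale (b - t) g"
      using sum_zero by (simp add: vec_eq_iff algebra_simps)
    ultimately have "qscale (1 + a) h = 0"
      using pointed unfolding strongly_convex_def by simp
    then have "h = 0" using y2(2) by (simp add: qscale_eq_0_iff)
    then show False using minimal[OF h(1)] cone_hull.zero by blast
  qed
qed

text \<open>The exposing functional is the sum of Farkas certificates separating each other
  generator \<open>-h\<close> from the cone generated by \<open>G\<close> and \<open>-g\<close>.\<close>

lemma minimal_generator_exposed:
  assumes fin: "finite G" and pointed: "strongly_convex (cone_hull G)"
    and minimal: "\<And>g. g \<in> G \<Longrightarrow> g \<notin> cone_hull (G - {g})" and g: "g \<in> G"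
  obtains w where "\<And>v. v \<in> G \<Longrightarrow> qpair w v \<ge> 0" "{v\<in>G. qpair w v = 0} = {g}"
proof -
  obtain W where W_nonneg: "\<And>h k. h \<in> G - {g} \<Longrightarrow> k \<in> insert (- g) G \<Longrightarrow> qpair (W h) k \<ge> 0"
    and W_pos: "\<And>h. h \<in> G - {g} \<Longrightarrow> qpair (W h) h > 0"
  proof -
    have "\<forall>h\<in>G - {g}. \<exists>W. (\<forall>k\<in>insert (- g) G. qpair W k \<ge> 0) \<and> qpair W h > 0"
    proof
      fix h assume h: "h \<in> G - {g}"
      have "finite (insert (- g) G)" using fin by simp
      moreover have "- h \<notin> cone_hull (insert (- g) G)"
        using h neg_generator_not_in_cone[OF pointed minimal g] by blast
      ultimately obtain W where "\<And>k. k \<in> insert (- g) G \<Longrightarrow> qpair W k \<ge> 0" "qpair W (- h) < 0"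
        by (rule farkas) blast
      then show "\<exists>W. (\<forall>k\<in>insert (- g) G. qpair W k \<ge> 0) \<and> qpair W h > 0"
        by (intro exI[of _ W]) (simp del: insert_iff)
    qed
    then obtain W where "\<forall>h\<in>G - {g}. (\<forall>k\<in>insert (- g) G. qpair (W h) k \<ge> 0) \<and> qpair (W h) h > 0"
      by (metis bchoice)
    then show ?thesis by (intro that) auto
  qed
  define w where "w = (\<Sum>h\<in>G - {g}. W h)"
  have w_eq: "qpair w k = (\<Sum>h\<in>G - {g}. qpair (W h) k)" for k
    unfolding w_def by (rule qpair_sum_left)
  have nonneg: "qpair w v \<ge> 0" if "v \<in> G" for v
    unfolding w_eq using W_nonneg that by (intro sum_nonneg) auto
  have "qpair w g = 0"
  proof -
    have "qpair (W h) g = 0" if "h \<in> G - {g}" for h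
      using W_nonneg[OF that, of g] W_nonneg[OF that, of "- g"] g by simp
    then show ?thesis unfolding w_eq by (intro sum.neutral) blast
  qed
  moreover have "qpair w v > 0" if "v \<in> G" "v \<noteq> g" for v
  proof -
    have "qpair (W v) v \<le> qpair w v" unfolding w_eq
      using that W_nonneg fin by (intro member_le_sum) auto
    then show ?thesis using W_pos[of v] that by simp
  qed
  ultimately have "{v\<in>G. qpair w v = 0} = {g}" using g by force
  with nonneg show ?thesis by (rule that)
qed

lemma cone_hull_single_pos_scale: "c > 0 \<Longrightarrow> cone_hull {qscale c v} = cone_hull {v}"
proof
  assume c: "c > 0"
  show "cone_hull {qscale c v} \<subseteq> cone_hull {v}"
    using c by (intro cone_hull_minimal) (simp add: cone_hull_scale cone_hull_gen)
  have "qscale (1 / c) (qscale c v) \<in> cone_hull {qscale c v}"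
    using c by (intro cone_hull_scale cone_hull_gen) simp_all
  then show "cone_hull {v} \<subseteq> cone_hull {qscale c v}"
    using c by (intro cone_hull_minimal) simp
qed

lemma ray_mem_cone: "\<rho> \<in> rays C \<Longrightarrow> qvec \<rho> \<in> C"
  unfolding rays_def is_face_def by (auto simp: cone_gen_eq_cone_hull intro: cone_hull_gen)

lemma exposed_generator_on_ray:
  assumes C: "C = cone_hull G" and nonneg: "\<And>v. v \<in> G \<Longrightarrow> qpair w v \<ge> 0"
    and exposed: "{v\<in>G. qpair w v = 0} = {qvec t}" and "t \<noteq> 0"
  shows "qvec t \<in> cone_hull (qvec ` rays C)"
proof -
  obtain \<rho> d where \<rho>: "primitive \<rho>" "d > 0" "t = iscale d \<rho>"
    using \<open>t \<noteq> 0\<close> by (rule primitive_factor)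
  then have t_eq: "qvec t = qscale (of_int d) (qvec \<rho>)" by (simp add: qvec_iscale)
  have "{x\<in>C. qpair w x = 0} = cone_hull {qvec t}"
    using cone_hull_face[of G w] nonneg exposed C by simp
  also have "\<dots> = cone_gen {qvec \<rho>}"
    using \<rho>(2) t_eq cone_hull_single_pos_scale[of "of_int d"] by (simp add: cone_gen_eq_cone_hull)
  finally have "is_face (cone_gen {qvec \<rho>}) C"
    unfolding is_face_def dual_cone_def using cone_hull_nonneg[OF nonneg] C by auto
  then have "\<rho> \<in> rays C" using \<rho>(1) by (simp add: rays_def)
  then show ?thesis using t_eq \<rho>(2) by (simp add: cone_hull_gen cone_hull_scale)
qed

lemma pointed_cone_subset_cone_hull_rays:
  assumes fin: "finite T" and pointed: "strongly_convex (cone_hull (qvec ` T))"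
  shows "cone_hull (qvec ` T) \<subseteq> cone_hull (qvec ` rays (cone_hull (qvec ` T)))"
proof -
  obtain G where G: "G \<subseteq> qvec ` T" "cone_hull G = cone_hull (qvec ` T)"
    and minimal: "\<And>g. g \<in> G \<Longrightarrow> g \<notin> cone_hull (G - {g})"
    using minimal_generators[of "qvec ` T"] fin by blast
  have "G \<subseteq> cone_hull (qvec ` rays (cone_hull (qvec ` T)))"
  proof
    fix g assume g: "g \<in> G"
    have "finite G" using G(1) fin finite_subset by blast
    moreover have "strongly_convex (cone_hull G)" using pointed G(2) by simp
    ultimately obtain w where w: "\<And>v. v \<in> G \<Longrightarrow> qpair w v \<ge> 0" "{v\<in>G. qpair w v = 0} = {g}"
      using minimal_generator_exposed[OF _ _ minimal g] by blast
    obtain t where t: "g = qvec t" using g G(1) by blast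
    have "g \<noteq> 0" using minimal[OF g] cone_hull.zero by blast
    then have "t \<noteq> 0" using t by auto
    then show "g \<in> cone_hull (qvec ` rays (cone_hull (qvec ` T)))"
      using exposed_generator_on_ray[OF G(2)[symmetric] w[unfolded t]] t by simp
  qed
  then show ?thesis using G(2) cone_hull_minimal by blast
qed

lemma qspan_zero: "0 \<in> qspan A"
  unfolding qspan_def by (auto intro!: exI[of _ "{}"])

lemma qspan_step:
  assumes "x \<in> qspan A" "a \<in> A"
  shows "x + qscale c a \<in> qspan A"
proof -
  obtain F k where F: "finite F" "F \<subseteq> A" "x = (\<Sum>v\<in>F. qscale (k v) v)"
    using assms(1) unfolding qspan_def by auto
  define k' where "k' = (if a \<in> F then k else k(a := 0))"
  have "x = (\<Sum>v\<in>insert a F. qscale (k' v) v)"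
    using F by (cases "a \<in> F") (auto simp: k'_def insert_absorb intro!: sum.cong)
  then have "x + qscale c a = (\<Sum>v\<in>insert a F. qscale ((k'(a := k' a + c)) v) v)"
    using sum_qscale_update[of "insert a F" a k' c] F(1) by simp
  then show ?thesis using F assms(2) unfolding qspan_def by blast
qed

lemma cone_hull_subset_qspan:
  assumes "\<And>v. v \<in> G \<Longrightarrow> v \<in> A \<or> - v \<in> A"
  shows "cone_hull G \<subseteq> qspan A"
proof
  fix x assume "x \<in> cone_hull G" then show "x \<in> qspan A"
  proof (induction x rule: cone_hull.induct)
    case zero then show ?case by (rule qspan_zero)
  next
    case (step x v c)
    show ?case
    proof (cases "v \<in> A")
      case True then show ?thesis using qspan_step[OF step(4) True] by simp
    next
      case False
      then have "- v \<in> A" using assms[OF step(2)] by simp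
      moreover have "qscale c v = qscale (- c) (- v)" by (simp add: vec_eq_iff)
      ultimately show ?thesis using qspan_step[OF step(4), of "- v" "- c"] by simp
    qed
  qed
qed

lemma qspan_perp:
  assumes "\<And>x. x \<in> A \<Longrightarrow> qpair w x = 0" and "y \<in> qspan A"
  shows "qpair w y = 0"
  using assms unfolding qspan_def by (auto simp: qpair_sum_right subset_iff intro!: sum.neutral)

text \<open>Farkas' lemma for the cone generated by \<open>\<plusminus>T\<close>, then clearing denominators.\<close>

lemma integral_annihilator:
  assumes fin: "finite T" and T: "\<And>s. s \<in> T \<Longrightarrow> qvec s \<in> A" and p: "qvec p \<notin> qspan A"
  obtains W where "\<And>s. s \<in> T \<Longrightarrow> pair W s = 0" "pair W p \<noteq> 0"
proof -
  define G where "G = qvec ` T \<union> uminus ` qvec ` T"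
  have "cone_hull G \<subseteq> qspan A" by (rule cone_hull_subset_qspan) (auto simp: G_def T)
  then have "qvec p \<notin> cone_hull G" using p by blast
  moreover have "finite G" using fin by (simp add: G_def)
  ultimately obtain w where w: "\<And>g. g \<in> G \<Longrightarrow> qpair w g \<ge> 0" "qpair w (qvec p) < 0"
    using farkas[OF \<open>finite G\<close> \<open>qvec p \<notin> cone_hull G\<close>] by blast
  obtain d W where dW: "d > 0" "qvec W = qscale (of_int d) w" by (rule clear_denominators)
  have "pair W s = 0" if "s \<in> T" for s
  proof -
    have "qpair w (qvec s) \<ge> 0" "qpair w (- qvec s) \<ge> 0"
      using w(1) that unfolding G_def by blast+
    then have "of_int (pair W s) = (0 :: rat)"
      using qpair_qvec[of W s] dW(2) by simp
    then show ?thesis by simp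
  qed
  moreover have "(of_int (pair W p) :: rat) = of_int d * qpair w (qvec p)"
    using qpair_qvec[of W p] dW(2) by simp
  then have "pair W p \<noteq> 0" using dW(1) w(2) by auto
  ultimately show ?thesis by (rule that)
qed

lemma indicator_mem_alg: "m \<in> dualM \<sigma> \<Longrightarrow> (\<lambda>x. if x = m then (1::complex) else 0) \<in> alg \<sigma>"
  by (auto simp: alg_def)

lemma der_indicator: "der e p (\<lambda>x. if x = m then (1::complex) else 0) (m + e) = of_int (pair m p)"
  by (simp add: der_def)

lemma homogeneous_vf_shift:
  assumes "homogeneous_vf \<sigma> e p" "m \<in> dualM \<sigma>" "pair m p \<noteq> 0"
  shows "m + e \<in> dualM \<sigma>"
proof -
  let ?f = "\<lambda>x. if x = m then (1::complex) else 0"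
  have "der e p ?f \<in> alg \<sigma>"
    using assms(1) indicator_mem_alg[OF assms(2)] unfolding homogeneous_vf_def by blast
  moreover have "der e p ?f (m + e) \<noteq> 0" using assms(3) der_indicator[of e p m] by simp
  ultimately show ?thesis by (auto simp: alg_def)
qed

lemma vanishes_on_orbit_closure_iff:
  assumes "homogeneous_vf \<sigma> e p"
  shows "vanishes_on_orbit_closure \<sigma> \<tau> e p \<longleftrightarrow>
    (\<forall>m\<in>dualM \<sigma>. pair m p \<noteq> 0 \<longrightarrow> m + e \<notin> perpM \<tau>)"
proof
  assume V: "vanishes_on_orbit_closure \<sigma> \<tau> e p"
  show "\<forall>m\<in>dualM \<sigma>. pair m p \<noteq> 0 \<longrightarrow> m + e \<notin> perpM \<tau>"
  proof (intro ballI impI)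
    fix m assume m: "m \<in> dualM \<sigma>" "pair m p \<noteq> 0"
    let ?f = "\<lambda>x. if x = m then (1::complex) else 0"
    have "der e p ?f \<in> orbit_ideal \<sigma> \<tau>"
      using V indicator_mem_alg[OF m(1)] unfolding vanishes_on_orbit_closure_def by auto
    then show "m + e \<notin> perpM \<tau>" using m(2) der_indicator[of e p m] by (auto simp: orbit_ideal_def)
  qed
next
  assume H: "\<forall>m\<in>dualM \<sigma>. pair m p \<noteq> 0 \<longrightarrow> m + e \<notin> perpM \<tau>"
  show "vanishes_on_orbit_closure \<sigma> \<tau> e p" unfolding vanishes_on_orbit_closure_def
  proof
    fix g assume "g \<in> der e p ` alg \<sigma>"
    then obtain f where f: "f \<in> alg \<sigma>" "g = der e p f" by auto
    have g: "g \<in> alg \<sigma>" using assms f unfolding homogeneous_vf_def by auto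
    have "m \<notin> perpM \<tau>" if "g m \<noteq> 0" for m
    proof -
      have "f (m - e) \<noteq> 0" "pair (m - e) p \<noteq> 0" using that f(2) by (auto simp: der_def)
      then have "m - e \<in> dualM \<sigma>" "pair (m - e) p \<noteq> 0" using f(1) by (auto simp: alg_def)
      then show ?thesis using H by fastforce
    qed
    then show "g \<in> orbit_ideal \<sigma> \<tau>" using g by (auto simp: alg_def orbit_ideal_def)
  qed
qed

lemma positive_ray_excludes_perp:
  assumes "\<tau> \<subseteq> \<sigma>" "\<rho> \<in> rays \<tau>" "pair e \<rho> > 0" "m \<in> dualM \<sigma>"
  shows "m + e \<notin> perpM \<tau>"
proof
  assume "m + e \<in> perpM \<tau>"
  moreover have "qvec \<rho> \<in> \<tau>" using ray_mem_cone assms(2) .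
  ultimately have "pair (m + e) \<rho> = 0" by (auto simp: perpM_def)
  moreover have "pair m \<rho> \<ge> 0"
    using assms(1,4) \<open>qvec \<rho> \<in> \<tau>\<close> unfolding dualM_def dual_cone_def by force
  ultimately show False using assms(3) by (simp add: pair_add_left)
qed

locale integral_face =
  fixes \<sigma> \<tau> :: "(rat ^ 'n) set" and S :: "(int ^ 'n) set" and U :: "int ^ 'n"
  assumes finite_gens: "finite S"
    and cone_eq: "\<sigma> = cone_hull (qvec ` S)"
    and U_nonneg: "\<And>s. s \<in> S \<Longrightarrow> pair U s \<ge> 0"
    and face_eq: "\<tau> = {x\<in>\<sigma>. qpair (qvec U) x = 0}"
    and pointed: "strongly_convex \<sigma>"
begin

definition face_gens :: "(int ^ 'n) set" where
  "face_gens = {s\<in>S. pair U s = 0}"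

lemma finite_face_gens: "finite face_gens"
  using finite_gens by (simp add: face_gens_def)

lemma face_eq_cone_hull: "\<tau> = cone_hull (qvec ` face_gens)"
proof -
  have "\<And>v. v \<in> qvec ` S \<Longrightarrow> qpair (qvec U) v \<ge> 0" using U_nonneg by auto
  moreover have "{v\<in>qvec ` S. qpair (qvec U) v = 0} = qvec ` face_gens"
    by (auto simp: face_gens_def)
  ultimately show ?thesis using cone_hull_face[of "qvec ` S" "qvec U"] by (simp add: face_eq cone_eq)
qed

lemma face_subset: "\<tau> \<subseteq> \<sigma>"
  using face_eq by blast

lemma face_gen_mem: "s \<in> face_gens \<Longrightarrow> qvec s \<in> \<tau>"
  by (simp add: face_eq_cone_hull cone_hull_gen)

lemma U_pos: "s \<in> S \<Longrightarrow> s \<notin> face_gens \<Longrightarrow> pair U s \<ge> 1"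
  using U_nonneg[of s] by (simp add: face_gens_def)

lemma mem_dualM_iff: "m \<in> dualM \<sigma> \<longleftrightarrow> (\<forall>s\<in>S. pair m s \<ge> 0)"
proof
  assume "m \<in> dualM \<sigma>"
  then show "\<forall>s\<in>S. pair m s \<ge> 0"
    using qpair_qvec[of m] by (force simp: dualM_def dual_cone_def cone_eq intro: cone_hull_gen)
next
  assume "\<forall>s\<in>S. pair m s \<ge> 0"
  then have nonneg: "\<And>v. v \<in> qvec ` S \<Longrightarrow> qpair (qvec m) v \<ge> 0" by auto
  show "m \<in> dualM \<sigma>" using cone_hull_nonneg[OF nonneg] by (auto simp: dualM_def dual_cone_def cone_eq)
qed

lemma mem_perpM_iff: "m \<in> perpM \<tau> \<longleftrightarrow> (\<forall>s\<in>face_gens. pair m s = 0)"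
proof
  assume "m \<in> perpM \<tau>"
  then show "\<forall>s\<in>face_gens. pair m s = 0"
    using qpair_qvec[of m] face_gen_mem by (force simp: perpM_def)
next
  assume "\<forall>s\<in>face_gens. pair m s = 0"
  then have perp: "\<And>v. v \<in> qvec ` face_gens \<Longrightarrow> qpair (qvec m) v = 0" by auto
  show "m \<in> perpM \<tau>" using cone_hull_perp[OF perp] by (auto simp: perpM_def face_eq_cone_hull)
qed

lemma nonpos_on_face_gens:
  assumes "\<not> (\<exists>\<rho>\<in>rays \<tau>. pair e \<rho> > 0)" and "s \<in> face_gens"
  shows "pair e s \<le> 0"
proof -
  have "strongly_convex \<tau>" using pointed face_subset by (auto simp: strongly_convex_def)
  then have "\<tau> \<subseteq> cone_hull (qvec ` rays \<tau>)"
    using pointed_cone_subset_cone_hull_rays[OF finite_face_gens] by (simp add: face_eq_cone_hull)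
  moreover have "qpair (- qvec e) v \<ge> 0" if "v \<in> qvec ` rays \<tau>" for v
    using assms(1) that by auto
  ultimately have "qpair (- qvec e) (qvec s) \<ge> 0"
    using cone_hull_nonneg face_gen_mem[OF assms(2)] by blast
  then show ?thesis by simp
qed

lemma shift_into_dualM:
  assumes "\<And>s. s \<in> face_gens \<Longrightarrow> pair W s \<ge> 0"
  obtains j0 where "\<And>j. j \<ge> j0 \<Longrightarrow> iscale j U + W \<in> dualM \<sigma>"
proof
  define j0 where "j0 = (\<Sum>s\<in>S. \<bar>pair W s\<bar>)"
  fix j assume j: "j \<ge> j0"
  have "j0 \<ge> 0" by (simp add: j0_def sum_nonneg)
  have "pair (iscale j U + W) s \<ge> 0" if s: "s \<in> S" for s
  proof (cases "s \<in> face_gens")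
    case True then show ?thesis
      using assms by (simp add: pair_add_left pair_iscale_left face_gens_def)
  next
    case False
    have "\<bar>pair W s\<bar> \<le> j0" unfolding j0_def using s finite_gens by (intro member_le_sum) auto
    moreover have "j * pair U s \<ge> j"
      using mult_left_mono[OF U_pos[OF s False], of j] j \<open>j0 \<ge> 0\<close> by simp
    ultimately show ?thesis using j by (simp add: pair_add_left pair_iscale_left)
  qed
  then show "iscale j U + W \<in> dualM \<sigma>" by (simp add: mem_dualM_iff)
qed

lemma typeI_criterion:
  assumes hom: "homogeneous_vf \<sigma> e p" and e: "e \<in> dualM \<sigma>"
  shows "vanishes_on_orbit_closure \<sigma> \<tau> e p \<longleftrightarrow>
    qvec p \<in> qspan \<tau> \<or> (\<exists>\<rho>\<in>rays \<tau>. pair e \<rho> > 0)"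
  unfolding vanishes_on_orbit_closure_iff[OF hom]
proof (intro iffI; (elim disjE)?)
  assume V: "\<forall>m\<in>dualM \<sigma>. pair m p \<noteq> 0 \<longrightarrow> m + e \<notin> perpM \<tau>"
  show "qvec p \<in> qspan \<tau> \<or> (\<exists>\<rho>\<in>rays \<tau>. pair e \<rho> > 0)"
  proof (rule ccontr)
    assume "\<not> ?thesis"
    then have p: "qvec p \<notin> qspan \<tau>" and no_ray: "\<not> (\<exists>\<rho>\<in>rays \<tau>. pair e \<rho> > 0)" by auto
    have e_perp: "pair e s = 0" if "s \<in> face_gens" for s
      using nonpos_on_face_gens[OF no_ray that] e that by (auto simp: mem_dualM_iff face_gens_def)
    obtain W where W: "\<And>s. s \<in> face_gens \<Longrightarrow> pair W s = 0" "pair W p \<noteq> 0"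
      using integral_annihilator[OF finite_face_gens face_gen_mem p] by blast
    obtain j0 where j0: "\<And>j. j \<ge> j0 \<Longrightarrow> iscale j U + W \<in> dualM \<sigma>"
      using shift_into_dualM[of W] W(1) by force
    txt \<open>Of two consecutive values of \<open>j\<close> at least one keeps \<open>\<langle>m, p\<rangle> \<noteq> 0\<close>, as \<open>\<langle>W, p\<rangle> \<noteq> 0\<close>.\<close>
    obtain j where j: "j \<ge> j0" "pair (iscale j U + W) p \<noteq> 0"
      using W(2) by (cases "pair (iscale j0 U + W) p = 0")
        (auto simp: pair_add_left pair_iscale_left algebra_simps intro: that[of j0] that[of "j0 + 1"])
    moreover have "iscale j U + W + e \<in> perpM \<tau>"
      using W(1) e_perp by (simp add: mem_perpM_iff pair_add_left pair_iscale_left face_gens_def)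
    ultimately show False using V j0 by blast
  qed
next
  assume "qvec p \<in> qspan \<tau>"
  show "\<forall>m\<in>dualM \<sigma>. pair m p \<noteq> 0 \<longrightarrow> m + e \<notin> perpM \<tau>"
  proof (intro ballI impI notI)
    fix m assume m: "m \<in> dualM \<sigma>" "pair m p \<noteq> 0" and "m + e \<in> perpM \<tau>"
    then have "m \<in> perpM \<tau>"
      using e by (force simp: mem_perpM_iff mem_dualM_iff pair_add_left face_gens_def)
    then have "\<And>x. x \<in> \<tau> \<Longrightarrow> qpair (qvec m) x = 0" by (simp add: perpM_def)
    then have "qpair (qvec m) (qvec p) = 0" using \<open>qvec p \<in> qspan \<tau>\<close> by (rule qspan_perp)
    then show False using m(2) by simp
  qed
next
  assume "\<exists>\<rho>\<in>rays \<tau>. pair e \<rho> > 0"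
  then show "\<forall>m\<in>dualM \<sigma>. pair m p \<noteq> 0 \<longrightarrow> m + e \<notin> perpM \<tau>"
    using positive_ray_excludes_perp[OF face_subset] by blast
qed

lemma typeII_criterion:
  assumes hom: "homogeneous_vf \<sigma> e p" and p: "p = iscale k r" "p \<noteq> 0" and e: "pair e r = -1"
  shows "vanishes_on_orbit_closure \<sigma> \<tau> e p \<longleftrightarrow> (\<exists>\<rho>\<in>rays \<tau>. pair e \<rho> > 0)"
  unfolding vanishes_on_orbit_closure_iff[OF hom]
proof
  assume V: "\<forall>m\<in>dualM \<sigma>. pair m p \<noteq> 0 \<longrightarrow> m + e \<notin> perpM \<tau>"
  show "\<exists>\<rho>\<in>rays \<tau>. pair e \<rho> > 0"
  proof (rule ccontr)
    assume no_ray: "\<not> ?thesis"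
    have "k \<noteq> 0" using p by (auto simp: iscale_def vec_eq_iff)
    have pair_p: "pair m p = k * pair m r" for m by (simp add: p pair_iscale_right)
    show False
    proof (cases "pair U r = 0")
      case True
      obtain j0 where "\<And>j. j \<ge> j0 \<Longrightarrow> iscale j U + - e \<in> dualM \<sigma>"
        using shift_into_dualM[of "- e"] nonpos_on_face_gens[OF no_ray]
        by (force simp: pair_neg_left)
      moreover have "pair (iscale j0 U + - e) p \<noteq> 0"
        using True e \<open>k \<noteq> 0\<close> by (simp add: pair_p pair_diff_left pair_iscale_left)
      moreover have "iscale j0 U + - e + e \<in> perpM \<tau>"
        by (simp add: mem_perpM_iff pair_iscale_left face_gens_def)
      ultimately show False using V by blast
    next
      case False
      then have U_p: "pair U p \<noteq> 0" using \<open>k \<noteq> 0\<close> by (simp add: pair_p)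
      have U: "U \<in> dualM \<sigma>" using U_nonneg by (simp add: mem_dualM_iff)
      then have "U + e \<in> dualM \<sigma>" using homogeneous_vf_shift[OF hom _ U_p] by blast
      then have "U + e \<in> perpM \<tau>" using nonpos_on_face_gens[OF no_ray]
        by (force simp: mem_dualM_iff mem_perpM_iff pair_add_left face_gens_def)
      then show False using V U U_p by blast
    qed
  qed
next
  assume "\<exists>\<rho>\<in>rays \<tau>. pair e \<rho> > 0"
  then show "\<forall>m\<in>dualM \<sigma>. pair m p \<noteq> 0 \<longrightarrow> m + e \<notin> perpM \<tau>"
    using positive_ray_excludes_perp[OF face_subset] by blast
qed

end

lemma integral_face_exists:
  assumes "rat_poly_cone \<sigma>" "strongly_convex \<sigma>" "is_face \<tau> \<sigma>"
  obtains S U where "integral_face \<sigma> \<tau> S U"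
proof -
  obtain S where S: "finite S" "\<sigma> = cone_hull (qvec ` S)"
    using assms(1) by (auto simp: rat_poly_cone_def cone_gen_eq_cone_hull)
  obtain u where u: "u \<in> dual_cone \<sigma>" "\<tau> = {x\<in>\<sigma>. qpair u x = 0}"
    using assms(3) by (auto simp: is_face_def)
  obtain d U where dU: "d > 0" "qvec U = qscale (of_int d) u" by (rule clear_denominators)
  have "\<tau> = {x\<in>\<sigma>. qpair (qvec U) x = 0}" using u(2) dU by auto
  moreover have "pair U s \<ge> 0" if "s \<in> S" for s
  proof -
    have "qpair u (qvec s) \<ge> 0" using u(1) S(2) that by (auto simp: dual_cone_def intro: cone_hull_gen)
    moreover have "(of_int (pair U s) :: rat) = of_int d * qpair u (qvec s)"
      using qpair_qvec[of U s] dU(2) by simp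
    ultimately have "(of_int (pair U s) :: rat) \<ge> 0" using dU(1) by simp
    then show ?thesis by simp
  qed
  ultimately have "integral_face \<sigma> \<tau> S U" using S assms(2) by unfold_locales auto
  then show ?thesis by (rule that)
qed

theorem lemma3p3:
  fixes \<sigma> \<tau> :: "(rat ^ 'n) set" and e p :: "int ^ 'n"
  assumes "rat_poly_cone \<sigma>" and "strongly_convex \<sigma>"
    and "p \<noteq> 0" and "homogeneous_vf \<sigma> e p"
    and "is_face \<tau> \<sigma>"
  shows "(typeI \<sigma> e \<longrightarrow> (vanishes_on_orbit_closure \<sigma> \<tau> e p \<longleftrightarrow>
            qvec p \<in> qspan \<tau> \<or> (\<exists>\<rho>\<in>rays \<tau>. pair e \<rho> > 0)))
       \<and> (typeII \<sigma> e p \<longrightarrow> (vanishes_on_orbit_closure \<sigma> \<tau> e p \<longleftrightarrow>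
            (\<exists>\<rho>\<in>rays \<tau>. pair e \<rho> > 0)))"
proof -
  obtain S U where "integral_face \<sigma> \<tau> S U"
    using integral_face_exists[OF assms(1,2,5)] .
  then interpret integral_face \<sigma> \<tau> S U .
  show ?thesis
  proof (intro conjI impI)
    assume "typeI \<sigma> e"
    then show "vanishes_on_orbit_closure \<sigma> \<tau> e p \<longleftrightarrow>
        qvec p \<in> qspan \<tau> \<or> (\<exists>\<rho>\<in>rays \<tau>. pair e \<rho> > 0)"
      using typeI_criterion[OF assms(4)] by (simp add: typeI_def)
  next
    assume "typeII \<sigma> e p"
    then obtain k r where "p = iscale k r" "pair e r = -1" by (auto simp: typeII_def)
    then show "vanishes_on_orbit_closure \<sigma> \<tau> e p \<longleftrightarrow> (\<exists>\<rho>\<in>rays \<tau>. pair e \<rho> > 0)"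
      using typeII_criterion[OF assms(4) _ assms(3)] by blast
  qed
qed

end
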